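(* Let $K$ be a stochastic kernel on a compact space $\Sigma$ with Borel $\sigma$-algebra $\mathscr{F}$, let $\Sigma_0\subset\Sigma_1\subset\Sigma_2$ be sets in $\mathscr{F}$ and $r>0$. Assume: (A1) $\mathscr{P}_{n_0}(x,\Sigma_0)\ge b_0>0$ for all $x\in\Sigma_0$; (A2) $\mathscr{P}_{n_1}(x,\Sigma_1)\ge1-r/4$ for all $x\in\Sigma_1\setminus\Sigma_0$; (A3) $\mathscr{P}_{n_2}(x,\Sigma_2)\ge1-r/4$ for all $x\in\Sigma_2\setminus\Sigma_1$; (A4) $\mathscr{P}^*_n(x,\Sigma_1^{\complement})\ge1-r/4$ for all $x\in\Sigma_2^{\complement}$ and all $n\ge0$. If $(1-b_0)^q<r/4$ for some $q\in\mathbb{N}$, then with $N:=qn_0+n_1+n_2$, for all $x\in\Sigma$, $$\mathbb{P}_x[\exists\, j\ge N:\ \xi^x_j\in\Sigma_1]<r.$$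
   Context: For $x\in\Sigma$ let $\mathbb{P}_x$ be the probability on $\Sigma^{\mathbb{N}}$ under which the coordinate process $\{\xi^x_n\}_{n\ge0}$ is a Markov chain with kernel $K$ and $\xi^x_0=x$. For $x\in E\in\mathscr{F}$: $\mathscr{P}_n(x,E)=\mathbb{P}_x[\xi^x_j\notin E\text{ for some }0\le j\le n]$ and $\mathscr{P}^*_n(x,E)=\mathbb{P}_x[\xi^x_j\in E\text{ for all }0\le j\le n]$. Here $n_0,n_1,n_2\in\mathbb{N}$. *)

theory Defs
  imports "HOL-Probability.Probability"
begin

definition stochastic_kernel :: "('a::topological_space \<Rightarrow> 'a measure) \<Rightarrow> bool" where
  "stochastic_kernel K \<longleftrightarrow> K \<in> borel \<rightarrow>\<^sub>M prob_algebra borel"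

text \<open>These conditions determine the finite-dimensional distributions, hence P uniquely.\<close>
definition markov_chain_law ::
  "('a::topological_space \<Rightarrow> 'a measure) \<Rightarrow> 'a \<Rightarrow> (nat \<Rightarrow> 'a) measure \<Rightarrow> bool" where
  "markov_chain_law K x P \<longleftrightarrow>
     prob_space P \<and> sets P = sets (PiM UNIV (\<lambda>_. borel)) \<and>
     (AE \<omega> in P. \<omega> 0 = x) \<and>
     (\<forall>n B A. B \<in> sets (PiM {..n} (\<lambda>_. borel)) \<longrightarrow> A \<in> sets borel \<longrightarrow>
        measure P {\<omega> \<in> space P. restrict \<omega> {..n} \<in> B \<and> \<omega> (Suc n) \<in> A}
        = (\<integral>\<omega>. indicator B (restrict \<omega> {..n}) * measure (K (\<omega> n)) A \<partial>P))"

definition exit_prob :: "(nat \<Rightarrow> 'a) measure \<Rightarrow> nat \<Rightarrow> 'a set \<Rightarrow> real" where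
  "exit_prob P n E = measure P {\<omega> \<in> space P. \<exists>j\<le>n. \<omega> j \<notin> E}"

definition stay_prob :: "(nat \<Rightarrow> 'a) measure \<Rightarrow> nat \<Rightarrow> 'a set \<Rightarrow> real" where
  "stay_prob P n E = measure P {\<omega> \<in> space P. \<forall>j\<le>n. \<omega> j \<in> E}"

end

theory Submission
  imports Defs
begin

text \<open>
  Write \<open>h(z, a)\<close> for the probability that the chain started at \<open>z\<close> visits \<open>S1\<close> at some
  time \<open>\<ge> a\<close>. Splitting paths at their first exit time from a set \<open>S\<close> and applying the Markov
  property there gives, for \<open>n \<le> a\<close>,
  \<open>h(y, a) \<le> c1 * P_y[leave S within n steps] + c2 * P_y[stay in S for n steps]\<close>
  whenever \<open>h(-, a - n)\<close> is bounded by \<open>c1\<close> off \<open>S\<close> and by \<open>c2\<close> on \<open>S\<close>.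
  By (A4), \<open>h \<le> r/4\<close> off \<open>S2\<close>; one such step with \<open>S = S2\<close> (A3) and one with \<open>S = S1\<close> (A2)
  give \<open>h(-, a) \<le> 3r/4\<close> off \<open>S0\<close> for \<open>a \<ge> n1 + n2\<close>, and \<open>q\<close> steps with \<open>S = S0\<close> (A1)
  give \<open>h(-, a) \<le> (1 - b0)^q + 3r/4 < r\<close> on \<open>S0\<close> for \<open>a \<ge> q n0 + n1 + n2\<close>.
  The Markov property at a fixed time is obtained from the one-step law by induction over
  finite cylinders, and visits after time \<open>a\<close> are increasing limits of visits in finite windows.
\<close>

lemma all_le_Suc_conv: "(\<forall>k\<le>Suc m. R k) \<longleftrightarrow> R 0 \<and> (\<forall>k\<le>m. R (Suc k))"
  by (metis Suc_le_mono le0 not0_implies_Suc)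

definition cylinder :: "(nat \<Rightarrow> 'a set) \<Rightarrow> nat \<Rightarrow> (nat \<Rightarrow> 'a) set" where
  "cylinder P t = {\<omega>. \<forall>j\<le>t. \<omega> j \<in> P j}"

lemma cylinder_Int_coordinate: "cylinder (P(t := P t \<inter> B)) t = cylinder P t \<inter> {\<omega>. \<omega> t \<in> B}"
  by (auto simp: cylinder_def)

lemma cylinder_upd_UNIV: "cylinder (P(Suc t := UNIV)) (Suc t) = cylinder P t"
  by (auto simp: cylinder_def le_Suc_eq)

lemma indicator_cylinder_restrict:
  "indicator (Pi\<^sub>E {..t} P) (restrict \<omega> {..t}) = (indicator (cylinder P t) \<omega> :: 'b::zero_neq_one)"
  by (auto simp: cylinder_def indicator_def restrict_PiE_iff)

definition visits :: "'a set \<Rightarrow> nat \<Rightarrow> nat \<Rightarrow> (nat \<Rightarrow> 'a) set" where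
  "visits T a b = {\<omega>. \<exists>j. a \<le> j \<and> j \<le> b \<and> \<omega> j \<in> T}"

definition visits_after :: "'a set \<Rightarrow> nat \<Rightarrow> (nat \<Rightarrow> 'a) set" where
  "visits_after T a = {\<omega>. \<exists>j\<ge>a. \<omega> j \<in> T}"

lemma visits_eq_Compl_cylinder: "visits T a b = - cylinder (\<lambda>k. if a \<le> k then - T else UNIV) b"
  by (auto simp: visits_def cylinder_def)

lemma visits_shift: "\<omega> \<in> visits T (t + a) (t + b) \<longleftrightarrow> (\<lambda>k. \<omega> (t + k)) \<in> visits T a b"
proof
  assume "\<omega> \<in> visits T (t + a) (t + b)"
  then obtain j where "t + a \<le> j" "j \<le> t + b" "\<omega> j \<in> T"
    by (auto simp: visits_def)
  then show "(\<lambda>k. \<omega> (t + k)) \<in> visits T a b"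
    unfolding visits_def by (intro CollectI exI[of _ "j - t"]) auto
next
  assume "(\<lambda>k. \<omega> (t + k)) \<in> visits T a b"
  then obtain k where "a \<le> k" "k \<le> b" "\<omega> (t + k) \<in> T"
    by (auto simp: visits_def)
  then show "\<omega> \<in> visits T (t + a) (t + b)"
    unfolding visits_def by (intro CollectI exI[of _ "t + k"]) auto
qed

lemma incseq_visits: "incseq (visits T a)"
  by (auto simp: incseq_def visits_def)

lemma UN_visits: "(\<Union>b. visits T a b) = visits_after T a"
  by (auto simp: visits_def visits_after_def)

definition first_exit :: "'a set \<Rightarrow> nat \<Rightarrow> (nat \<Rightarrow> 'a) set" where
  "first_exit S t = cylinder (\<lambda>j. if j < t then S else - S) t"

lemma UN_first_exit: "(\<Union>t\<le>n. first_exit S t) = {\<omega>. \<exists>j\<le>n. \<omega> j \<notin> S}"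
proof
  show "{\<omega>. \<exists>j\<le>n. \<omega> j \<notin> S} \<subseteq> (\<Union>t\<le>n. first_exit S t)"
  proof
    fix \<omega> assume "\<omega> \<in> {\<omega>. \<exists>j\<le>n. \<omega> j \<notin> S}"
    then obtain j where j: "j \<le> n" "\<omega> j \<notin> S" by blast
    define t where "t = (LEAST j. \<omega> j \<notin> S)"
    have "\<omega> t \<notin> S"
      using LeastI[of "\<lambda>j. \<omega> j \<notin> S" j] j(2) by (simp add: t_def)
    moreover have "t \<le> n"
      using Least_le[of "\<lambda>j. \<omega> j \<notin> S" j] j by (simp add: t_def)
    moreover have "\<omega> i \<in> S" if "i < t" for i
      using not_less_Least[of i "\<lambda>j. \<omega> j \<notin> S"] that by (auto simp: t_def)
    ultimately have "\<omega> \<in> first_exit S t" "t \<in> {..n}"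
      by (auto simp: first_exit_def cylinder_def)
    then show "\<omega> \<in> (\<Union>t\<le>n. first_exit S t)"
      by blast
  qed
qed (auto simp: first_exit_def cylinder_def)

lemma disjoint_family_first_exit: "disjoint_family (first_exit S)"
proof -
  have "first_exit S s \<inter> first_exit S t = {}" if "s < t" for s t
    using that by (auto simp: first_exit_def cylinder_def)
  then show ?thesis
    unfolding disjoint_family_on_def by (metis Int_commute linorder_neqE_nat)
qed

locale markov_chain_laws =
  fixes K :: "'a::topological_space \<Rightarrow> 'a measure" and Px :: "'a \<Rightarrow> (nat \<Rightarrow> 'a) measure"
  assumes kernel: "stochastic_kernel K" and laws: "\<And>x. markov_chain_law K x (Px x)"
begin

lemma prob_space_Px [simp]: "prob_space (Px x)"
  using laws[of x] unfolding markov_chain_law_def by blast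

lemma sets_Px [measurable_cong]: "sets (Px x) = sets (PiM UNIV (\<lambda>_. borel))"
  using laws[of x] unfolding markov_chain_law_def by blast

lemma space_Px [simp]: "space (Px x) = UNIV"
  using sets_eq_imp_space_eq[OF sets_Px[of x]] by (simp add: space_PiM)

lemma markov_law:
  "B \<in> sets (PiM {..t} (\<lambda>_. borel)) \<Longrightarrow> A \<in> sets borel \<Longrightarrow>
    measure (Px x) {\<omega> \<in> space (Px x). restrict \<omega> {..t} \<in> B \<and> \<omega> (Suc t) \<in> A}
    = (\<integral>\<omega>. indicator B (restrict \<omega> {..t}) * measure (K (\<omega> t)) A \<partial>Px x)"
  using laws[of x] unfolding markov_chain_law_def by blast

lemma UNIV_in_sets_Px [simp]: "UNIV \<in> sets (Px x)"
  using sets.top[of "Px x"] by simp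

lemma AE_start: "AE \<omega> in Px x. \<omega> 0 = x"
  using laws[of x] unfolding markov_chain_law_def by blast

lemma measurable_coordinate [measurable]: "(\<lambda>\<omega>. \<omega> j) \<in> Px x \<rightarrow>\<^sub>M borel"
  by (simp add: measurable_cong_sets[OF sets_Px refl])

lemma kernel_measurable [measurable]: "K \<in> borel \<rightarrow>\<^sub>M subprob_algebra borel"
  using measurable_prob_algebraD kernel unfolding stochastic_kernel_def by blast

lemma prob_space_K [simp]: "prob_space (K y)" and sets_K [measurable_cong]: "sets (K y) = sets borel"
  using measurable_space[of K borel "prob_algebra borel" y] kernel
  by (auto simp: space_prob_algebra stochastic_kernel_def)

lemma coordinate_set_in_sets: "A \<in> sets borel \<Longrightarrow> {\<omega>. \<omega> j \<in> A} \<in> sets (Px x)"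
  using measurable_sets[OF measurable_coordinate[of j x], of A] by (simp add: vimage_def)

lemma cylinder_in_sets [measurable]: "(\<And>j. P j \<in> sets borel) \<Longrightarrow> cylinder P t \<in> sets (Px x)"
proof -
  assume [measurable]: "\<And>j. P j \<in> sets borel"
  have "cylinder P t = {\<omega> \<in> space (Px x). \<forall>j\<in>{..t}. \<omega> j \<in> P j}"
    by (auto simp: cylinder_def)
  also have "\<dots> \<in> sets (Px x)" by measurable
  finally show ?thesis .
qed

lemma markov_step:
  assumes [measurable]: "\<And>j. P j \<in> sets borel" "A \<in> sets borel"
  shows "measure (Px x) (cylinder P t \<inter> {\<omega>. \<omega> (Suc t) \<in> A})
    = (\<integral>\<omega>. indicator (cylinder P t) \<omega> * measure (K (\<omega> t)) A \<partial>Px x)"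
proof -
  have "Pi\<^sub>E {..t} P \<in> sets (PiM {..t} (\<lambda>_. borel))"
    by (intro sets_PiM_I_finite) auto
  moreover have "cylinder P t \<inter> {\<omega>. \<omega> (Suc t) \<in> A}
      = {\<omega> \<in> space (Px x). restrict \<omega> {..t} \<in> Pi\<^sub>E {..t} P \<and> \<omega> (Suc t) \<in> A}"
    by (auto simp: cylinder_def restrict_PiE_iff)
  ultimately show ?thesis
    using markov_law[of "Pi\<^sub>E {..t} P" t A x] by (simp add: indicator_cylinder_restrict)
qed

lemma markov_step_distr:
  fixes x t
  assumes [measurable]: "\<And>j. P j \<in> sets borel"
  defines "D \<equiv> density (Px x) (indicator (cylinder P t))"
  shows "distr D borel (\<lambda>\<omega>. \<omega> (Suc t)) = D \<bind> (\<lambda>\<omega>. K (\<omega> t))"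
proof (rule measure_eqI)
  show "sets (distr D borel (\<lambda>\<omega>. \<omega> (Suc t))) = sets (D \<bind> (\<lambda>\<omega>. K (\<omega> t)))"
    unfolding D_def by (subst sets_bind[where N=borel]) (auto simp: sets_K)
next
  interpret P: prob_space "Px x" by simp
  fix A assume "A \<in> sets (distr D borel (\<lambda>\<omega>. \<omega> (Suc t)))"
  then have A [measurable]: "A \<in> sets borel" by simp
  have "emeasure (distr D borel (\<lambda>\<omega>. \<omega> (Suc t))) A = emeasure D {\<omega>. \<omega> (Suc t) \<in> A}"
    unfolding D_def by (subst emeasure_distr) (auto simp: vimage_def)
  also have "\<dots> = ennreal (measure (Px x) (cylinder P t \<inter> {\<omega>. \<omega> (Suc t) \<in> A}))"
    unfolding D_def
    by (subst emeasure_restricted) (auto simp: P.emeasure_eq_measure coordinate_set_in_sets)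
  also have "\<dots> = ennreal (\<integral>\<omega>. indicator (cylinder P t) \<omega> * measure (K (\<omega> t)) A \<partial>Px x)"
    by (simp add: markov_step)
  also have "\<dots> = (\<integral>\<^sup>+\<omega>. ennreal (indicator (cylinder P t) \<omega> * measure (K (\<omega> t)) A) \<partial>Px x)"
    by (intro nn_integral_eq_integral[symmetric] P.integrable_const_bound[where B=1])
       (auto simp: prob_space.prob_le_1 split: split_indicator)
  also have "\<dots> = (\<integral>\<^sup>+\<omega>. indicator (cylinder P t) \<omega> * emeasure (K (\<omega> t)) A \<partial>Px x)"
    by (intro nn_integral_cong)
       (auto simp: ennreal_mult finite_measure.emeasure_eq_measure prob_space.finite_measure
         split: split_indicator)
  also have "\<dots> = emeasure (D \<bind> (\<lambda>\<omega>. K (\<omega> t))) A"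
    unfolding D_def by (simp add: emeasure_bind[where N=borel] nn_integral_density)
  finally show "emeasure (distr D borel (\<lambda>\<omega>. \<omega> (Suc t))) A = emeasure (D \<bind> (\<lambda>\<omega>. K (\<omega> t))) A" .
qed

text \<open>Restricting \<open>Px x\<close> to the cylinder by a density turns the one-step law into an
  equality of measures, which then extends from indicators to bounded functions.\<close>

lemma markov_step_integral:
  fixes f :: "'a \<Rightarrow> real"
  assumes [measurable]: "\<And>j. P j \<in> sets borel" "f \<in> borel_measurable borel"
    and bounded: "\<And>y. \<bar>f y\<bar> \<le> c"
  shows "(\<integral>\<omega>. indicator (cylinder P t) \<omega> * f (\<omega> (Suc t)) \<partial>Px x)
    = (\<integral>\<omega>. indicator (cylinder P t) \<omega> * (\<integral>y. f y \<partial>K (\<omega> t)) \<partial>Px x)"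
proof -
  interpret P: prob_space "Px x" by simp
  define D where "D = density (Px x) (indicator (cylinder P t))"
  have sets_D [measurable_cong]: "sets D = sets (Px x)" by (simp add: D_def)
  have integral_D: "(\<integral>\<omega>. g \<omega> \<partial>D) = (\<integral>\<omega>. indicator (cylinder P t) \<omega> * g \<omega> \<partial>Px x)"
    if [measurable]: "g \<in> borel_measurable (Px x)" for g :: "_ \<Rightarrow> real"
    using integral_density[of g "Px x" "indicator (cylinder P t)"] by (simp add: D_def ennreal_indicator)
  have "(\<integral>\<omega>. indicator (cylinder P t) \<omega> * f (\<omega> (Suc t)) \<partial>Px x) = (\<integral>y. f y \<partial>distr D borel (\<lambda>\<omega>. \<omega> (Suc t)))"
    by (subst integral_distr) (auto simp: integral_D)
  also have "\<dots> = (\<integral>\<omega>. (\<integral>y. f y \<partial>K (\<omega> t)) \<partial>D)"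
    unfolding D_def markov_step_distr[OF assms(1)]
  proof (rule integral_bind[where B=c and B'=1 and K=borel])
    show "finite_measure (density (Px x) (indicator (cylinder P t)))"
      by (simp add: P.finite_measure_restricted)
  qed (use bounded in \<open>auto simp: prob_space.emeasure_space_1\<close>)
  also have "\<dots> = (\<integral>\<omega>. indicator (cylinder P t) \<omega> * (\<integral>y. f y \<partial>K (\<omega> t)) \<partial>Px x)"
    by (rule integral_D) measurable
  finally show ?thesis .
qed

text \<open>The probability of a cylinder computed by iterating the kernel; it serves to show that
  \<open>y \<mapsto> measure (Px y) (cylinder A m)\<close> is Borel measurable (see \<open>prob_cylinder\<close>).\<close>

primrec cylinder_prob :: "nat \<Rightarrow> (nat \<Rightarrow> 'a set) \<Rightarrow> 'a \<Rightarrow> real" where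
  "cylinder_prob 0 A y = indicator (A 0) y"
| "cylinder_prob (Suc m) A y = indicator (A 0) y * (\<integral>z. cylinder_prob m (\<lambda>k. A (Suc k)) z \<partial>K y)"

lemma borel_measurable_cylinder_prob [measurable]:
  "(\<And>k. A k \<in> sets borel) \<Longrightarrow> cylinder_prob m A \<in> borel_measurable borel"
proof (induction m arbitrary: A)
  case 0
  then show ?case by simp
next
  case (Suc m)
  have [measurable]: "A k \<in> sets borel" "cylinder_prob m (\<lambda>k. A (Suc k)) \<in> borel_measurable borel" for k
    using Suc by auto
  show ?case by simp
qed

lemma cylinder_prob_bounds:
  assumes "\<And>k. A k \<in> sets borel"
  shows "0 \<le> cylinder_prob m A y \<and> cylinder_prob m A y \<le> 1"
  using assms
proof (induction m arbitrary: A y)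
  case 0
  then show ?case by (simp split: split_indicator)
next
  case (Suc m)
  interpret Ky: prob_space "K y" by simp
  define f where "f = cylinder_prob m (\<lambda>k. A (Suc k))"
  have f [measurable]: "f \<in> borel_measurable borel" and f_bounds: "0 \<le> f z \<and> f z \<le> 1" for z
    using Suc unfolding f_def by auto
  have "integrable (K y) f"
    using f_bounds by (intro Ky.integrable_const_bound[where B=1]) (auto simp: measurable_cong_sets[OF sets_K refl])
  then have "0 \<le> (\<integral>z. f z \<partial>K y) \<and> (\<integral>z. f z \<partial>K y) \<le> 1"
    using f_bounds by (auto intro: Ky.integral_le_const)
  then show ?case by (simp add: f_def split: split_indicator)
qed

lemma markov_cylinder_prob:
  assumes [measurable]: "\<And>j. P j \<in> sets borel" "\<And>k. A k \<in> sets borel"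
  shows "measure (Px x) (cylinder P t \<inter> {\<omega>. \<forall>k\<le>m. \<omega> (t + k) \<in> A k})
    = (\<integral>\<omega>. indicator (cylinder P t) \<omega> * cylinder_prob m A (\<omega> t) \<partial>Px x)"
  using assms
proof (induction m arbitrary: A P t)
  case 0
  have "cylinder P t \<inter> {\<omega>. \<forall>k\<le>0. \<omega> (t + k) \<in> A k} = cylinder (P(t := P t \<inter> A 0)) t"
    by (simp add: cylinder_Int_coordinate)
  moreover have "indicator (cylinder P t) \<omega> * cylinder_prob 0 A (\<omega> t)
      = indicator (cylinder (P(t := P t \<inter> A 0)) t) \<omega>" for \<omega>
    by (simp add: cylinder_Int_coordinate split: split_indicator)
  ultimately show ?case
    using 0 by simp
next
  case (Suc m)
  have [measurable]: "P j \<in> sets borel" "A j \<in> sets borel" for j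
    using Suc.prems by auto
  define Q where "Q = P(t := P t \<inter> A 0)"
  define f where "f = cylinder_prob m (\<lambda>k. A (Suc k))"
  have [measurable]: "Q j \<in> sets borel" for j
    by (simp add: Q_def)
  have f [measurable]: "f \<in> borel_measurable borel" and f_bounded: "\<bar>f y\<bar> \<le> 1" for y
    using cylinder_prob_bounds[of "\<lambda>k. A (Suc k)" m y] by (auto simp: f_def)
  have "cylinder P t \<inter> {\<omega>. \<forall>k\<le>Suc m. \<omega> (t + k) \<in> A k}
      = cylinder (Q(Suc t := UNIV)) (Suc t) \<inter> {\<omega>. \<forall>k\<le>m. \<omega> (Suc t + k) \<in> A (Suc k)}"
    unfolding cylinder_upd_UNIV Q_def cylinder_Int_coordinate
    by (auto simp: all_le_Suc_conv)
  then have "measure (Px x) (cylinder P t \<inter> {\<omega>. \<forall>k\<le>Suc m. \<omega> (t + k) \<in> A k})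
      = (\<integral>\<omega>. indicator (cylinder Q t) \<omega> * f (\<omega> (Suc t)) \<partial>Px x)"
    using Suc.IH[of "Q(Suc t := UNIV)" "\<lambda>k. A (Suc k)" "Suc t"]
    unfolding cylinder_upd_UNIV by (simp add: f_def)
  also have "\<dots> = (\<integral>\<omega>. indicator (cylinder Q t) \<omega> * (\<integral>y. f y \<partial>K (\<omega> t)) \<partial>Px x)"
    by (rule markov_step_integral) (auto intro: f_bounded)
  also have "\<dots> = (\<integral>\<omega>. indicator (cylinder P t) \<omega> * cylinder_prob (Suc m) A (\<omega> t) \<partial>Px x)"
    by (intro Bochner_Integration.integral_cong)
       (auto simp: Q_def f_def cylinder_Int_coordinate split: split_indicator)
  finally show ?case .
qed

lemma prob_cylinder:
  assumes [measurable]: "\<And>k. A k \<in> sets borel"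
  shows "measure (Px y) (cylinder A m) = cylinder_prob m A y"
proof -
  interpret P: prob_space "Px y" by simp
  have "measure (Px y) (cylinder A m) = (\<integral>\<omega>. cylinder_prob m A (\<omega> 0) \<partial>Px y)"
    using markov_cylinder_prob[of "\<lambda>_. UNIV" A y 0 m] by (simp add: cylinder_def)
  also have "\<dots> = (\<integral>\<omega>. cylinder_prob m A y \<partial>Px y)"
    by (rule integral_cong_AE) (use AE_start[of y] in \<open>auto elim!: AE_mp\<close>)
  finally show ?thesis using P.prob_space by simp
qed

lemma markov_property:
  assumes "\<And>j. P j \<in> sets borel" "\<And>k. A k \<in> sets borel"
  shows "measure (Px x) (cylinder P t \<inter> {\<omega>. \<forall>k\<le>m. \<omega> (t + k) \<in> A k})
    = (\<integral>\<omega>. indicator (cylinder P t) \<omega> * measure (Px (\<omega> t)) (cylinder A m) \<partial>Px x)"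
  using markov_cylinder_prob[OF assms] by (simp add: prob_cylinder assms)

lemma borel_measurable_prob_cylinder [measurable]:
  "(\<And>k. A k \<in> sets borel) \<Longrightarrow> (\<lambda>y. measure (Px y) (cylinder A m)) \<in> borel_measurable borel"
  by (simp add: prob_cylinder)

lemma avoiding_cylinder_in_sets:
  "T \<in> sets borel \<Longrightarrow> cylinder (\<lambda>k. if a \<le> k then - T else UNIV) b \<in> sets (Px x)"
  by (intro cylinder_in_sets) (auto intro: borel_comp)

lemma visits_in_sets [measurable]: "T \<in> sets borel \<Longrightarrow> visits T a b \<in> sets (Px x)"
  using sets.compl_sets[OF avoiding_cylinder_in_sets] by (simp add: visits_eq_Compl_cylinder Compl_eq_Diff_UNIV)

lemma visits_after_in_sets [measurable]: "T \<in> sets borel \<Longrightarrow> visits_after T a \<in> sets (Px x)"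
  by (auto simp flip: UN_visits)

lemma prob_visits: "T \<in> sets borel \<Longrightarrow>
    measure (Px y) (visits T a b) = 1 - measure (Px y) (cylinder (\<lambda>k. if a \<le> k then - T else UNIV) b)"
  using prob_space.prob_compl[OF prob_space_Px avoiding_cylinder_in_sets]
  by (simp add: visits_eq_Compl_cylinder Compl_eq_Diff_UNIV)

lemma tendsto_prob_visits:
  assumes "C \<in> sets (Px y)" "T \<in> sets borel"
  shows "(\<lambda>b. measure (Px y) (C \<inter> visits T a b)) \<longlonglongrightarrow> measure (Px y) (C \<inter> visits_after T a)"
proof -
  interpret P: prob_space "Px y" by simp
  have "(\<lambda>b. measure (Px y) (C \<inter> visits T a b)) \<longlonglongrightarrow> measure (Px y) (\<Union>b. C \<inter> visits T a b)"
    using assms incseq_visits[of T a]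
    by (intro Lim_measure_incseq) (auto simp: incseq_def P.emeasure_finite)
  then show ?thesis
    by (simp flip: UN_visits)
qed

lemma borel_measurable_prob_visits [measurable]:
  assumes "T \<in> sets borel"
  shows "(\<lambda>y. measure (Px y) (visits T a b)) \<in> borel_measurable borel"
proof -
  have "(\<lambda>y. measure (Px y) (cylinder (\<lambda>k. if a \<le> k then - T else UNIV) b)) \<in> borel_measurable borel"
    using assms by (intro borel_measurable_prob_cylinder) (auto intro: borel_comp)
  then show ?thesis
    using assms by (simp add: prob_visits)
qed

definition hit_prob :: "'a set \<Rightarrow> 'a \<Rightarrow> nat \<Rightarrow> real" where
  "hit_prob T y a = measure (Px y) (visits_after T a)"

lemma borel_measurable_hit_prob [measurable]:
  assumes [measurable]: "T \<in> sets borel"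
  shows "(\<lambda>y. hit_prob T y a) \<in> borel_measurable borel"
proof (rule borel_measurable_LIMSEQ_real)
  show "(\<lambda>b. measure (Px y) (visits T a b)) \<longlonglongrightarrow> hit_prob T y a" for y
    using tendsto_prob_visits[of UNIV y T a] by (simp add: hit_prob_def)
qed (use assms in measurable)

lemma markov_visits:
  assumes [measurable]: "\<And>j. P j \<in> sets borel" "T \<in> sets borel"
  shows "measure (Px x) (cylinder P t \<inter> visits T (t + a) (t + b))
    = (\<integral>\<omega>. indicator (cylinder P t) \<omega> * measure (Px (\<omega> t)) (visits T a b) \<partial>Px x)"
proof -
  interpret P: prob_space "Px x" by simp
  define A where "A = (\<lambda>k. if a \<le> k then - T else UNIV)"
  have [measurable]: "A k \<in> sets borel" for k
    by (simp add: A_def)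
  have "cylinder P t \<inter> visits T (t + a) (t + b)
      = cylinder P t - cylinder P t \<inter> {\<omega>. \<forall>k\<le>b. \<omega> (t + k) \<in> A k}"
  proof -
    have "\<omega> \<in> visits T (t + a) (t + b) \<longleftrightarrow> \<not> (\<forall>k\<le>b. \<omega> (t + k) \<in> A k)" for \<omega>
      using visits_shift[of \<omega> T t a b] by (simp add: visits_eq_Compl_cylinder cylinder_def A_def)
    then show ?thesis by blast
  qed
  then have "measure (Px x) (cylinder P t \<inter> visits T (t + a) (t + b))
      = measure (Px x) (cylinder P t) - measure (Px x) (cylinder P t \<inter> {\<omega>. \<forall>k\<le>b. \<omega> (t + k) \<in> A k})"
    by (simp add: P.finite_measure_Diff')
  also have "\<dots> = (\<integral>\<omega>. indicator (cylinder P t) \<omega> \<partial>Px x)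
      - (\<integral>\<omega>. indicator (cylinder P t) \<omega> * measure (Px (\<omega> t)) (cylinder A b) \<partial>Px x)"
    by (simp add: markov_property)
  also have "\<dots> = (\<integral>\<omega>. indicator (cylinder P t) \<omega> * (1 - measure (Px (\<omega> t)) (cylinder A b)) \<partial>Px x)"
    by (subst Bochner_Integration.integral_diff[symmetric])
       (auto intro!: P.integrable_const_bound[where B=1] Bochner_Integration.integral_cong
         simp: prob_space.prob_le_1 right_diff_distrib split: split_indicator)
  finally show ?thesis
    by (simp add: prob_visits A_def)
qed

lemma markov_hit:
  assumes [measurable]: "\<And>j. P j \<in> sets borel" "T \<in> sets borel"
  shows "measure (Px x) (cylinder P t \<inter> visits_after T (t + a))
    = (\<integral>\<omega>. indicator (cylinder P t) \<omega> * hit_prob T (\<omega> t) a \<partial>Px x)"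
proof (rule LIMSEQ_unique)
  interpret P: prob_space "Px x" by simp
  show "(\<lambda>b. measure (Px x) (cylinder P t \<inter> visits T (t + a) (t + b)))
      \<longlonglongrightarrow> measure (Px x) (cylinder P t \<inter> visits_after T (t + a))"
    using LIMSEQ_ignore_initial_segment[OF tendsto_prob_visits, of "cylinder P t" x T "t + a" t]
    by (simp add: add.commute)
  show "(\<lambda>b. measure (Px x) (cylinder P t \<inter> visits T (t + a) (t + b)))
      \<longlonglongrightarrow> (\<integral>\<omega>. indicator (cylinder P t) \<omega> * hit_prob T (\<omega> t) a \<partial>Px x)"
    unfolding markov_visits[OF assms]
  proof (rule integral_dominated_convergence[where w="\<lambda>_. 1"])
    show "AE \<omega> in Px x. (\<lambda>b. indicator (cylinder P t) \<omega> * measure (Px (\<omega> t)) (visits T a b))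
        \<longlonglongrightarrow> indicator (cylinder P t) \<omega> * hit_prob T (\<omega> t) a"
      using tendsto_prob_visits[of UNIV _ T a]
      by (intro AE_I2 tendsto_mult_left) (simp add: hit_prob_def)
  qed (auto simp: prob_space.prob_le_1 split: split_indicator)
qed

lemma hit_prob_antimono:
  assumes "T \<in> sets borel" "a \<le> a'"
  shows "hit_prob T y a' \<le> hit_prob T y a"
proof -
  interpret P: prob_space "Px y" by simp
  have "visits_after T a' \<subseteq> visits_after T a"
    using assms(2) le_trans unfolding visits_after_def by blast
  then show ?thesis
    unfolding hit_prob_def using assms(1) by (intro P.finite_measure_mono) auto
qed

lemma hit_prob_nonneg: "0 \<le> hit_prob T y a"
  by (simp add: hit_prob_def)

lemma hit_prob_le_1: "hit_prob T y a \<le> 1"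
  by (simp add: hit_prob_def prob_space.prob_le_1)

lemma markov_hit_le:
  assumes [measurable]: "\<And>j. P j \<in> sets borel" "T \<in> sets borel"
    and bound: "\<And>z. z \<in> P t \<Longrightarrow> hit_prob T z a \<le> c"
  shows "measure (Px x) (cylinder P t \<inter> visits_after T (t + a)) \<le> c * measure (Px x) (cylinder P t)"
proof -
  interpret P: prob_space "Px x" by simp
  have pointwise: "indicator (cylinder P t) \<omega> * hit_prob T (\<omega> t) a \<le> c * indicator (cylinder P t) \<omega>" for \<omega>
    using bound[of "\<omega> t"] by (simp add: cylinder_def split: split_indicator)
  have "integrable (Px x) (\<lambda>\<omega>. indicator (cylinder P t) \<omega> * hit_prob T (\<omega> t) a)"
    by (rule P.integrable_const_bound[where B=1])
       (simp_all add: hit_prob_nonneg hit_prob_le_1 split: split_indicator)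
  moreover have "integrable (Px x) (\<lambda>\<omega>. c * indicator (cylinder P t) \<omega>)"
    using cylinder_in_sets[OF assms(1)]
    by (intro integrable_mult_right integrable_real_indicator) (auto simp: less_top[symmetric])
  ultimately have "(\<integral>\<omega>. indicator (cylinder P t) \<omega> * hit_prob T (\<omega> t) a \<partial>Px x)
      \<le> (\<integral>\<omega>. c * indicator (cylinder P t) \<omega> \<partial>Px x)"
    using pointwise by (intro integral_mono)
  then show ?thesis
    by (simp add: markov_hit)
qed

lemma first_exit_in_sets: "S \<in> sets borel \<Longrightarrow> first_exit S t \<in> sets (Px x)"
  by (auto simp: first_exit_def intro!: cylinder_in_sets)

lemma stay_prob_eq_cylinder: "stay_prob (Px y) n S = measure (Px y) (cylinder (\<lambda>_. S) n)"
  by (simp add: stay_prob_def cylinder_def)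

lemma exit_prob_eq_sum_first_exit:
  assumes "S \<in> sets borel"
  shows "exit_prob (Px y) n S = (\<Sum>t\<le>n. measure (Px y) (first_exit S t))"
proof -
  interpret P: prob_space "Px y" by simp
  have "first_exit S t \<in> sets (Px y)" for t
    using assms by (rule first_exit_in_sets)
  moreover have "{\<omega> \<in> space (Px y). \<exists>j\<le>n. \<omega> j \<notin> S} = (\<Union>t\<le>n. first_exit S t)"
    by (simp add: UN_first_exit)
  ultimately show ?thesis
    unfolding exit_prob_def using disjoint_family_first_exit[of S]
    by (simp add: measure_finite_Union disjoint_family_on_def image_subset_iff)
qed

lemma exit_prob_le_1: "exit_prob (Px y) n S \<le> 1"
  by (simp add: exit_prob_def prob_space.prob_le_1)

lemma exit_prob_eq_1_minus_stay_prob: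
  assumes "S \<in> sets borel"
  shows "exit_prob (Px y) n S = 1 - stay_prob (Px y) n S"
proof -
  have "{\<omega>. \<exists>j\<le>n. \<omega> j \<notin> S} = UNIV - cylinder (\<lambda>_. S) n"
    by (auto simp: cylinder_def)
  then show ?thesis
    using assms prob_space.prob_compl[OF prob_space_Px, of "cylinder (\<lambda>_. S) n" y]
    by (simp add: exit_prob_def stay_prob_eq_cylinder)
qed

lemma hit_prob_first_exit_le:
  assumes [measurable]: "S \<in> sets borel" "T \<in> sets borel" and "n \<le> a"
    and outside: "\<And>z. z \<notin> S \<Longrightarrow> hit_prob T z (a - n) \<le> c1"
    and inside: "\<And>z. z \<in> S \<Longrightarrow> hit_prob T z (a - n) \<le> c2"
  shows "hit_prob T y a \<le> c1 * exit_prob (Px y) n S + c2 * stay_prob (Px y) n S"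
proof -
  interpret P: prob_space "Px y" by simp
  let ?V = "visits_after T a"
  have first_exit_sets: "first_exit S t \<in> sets (Px y)" for t
    by (simp add: first_exit_in_sets)
  have stay_sets: "cylinder (\<lambda>_. S) n \<in> sets (Px y)"
    by (auto intro!: cylinder_in_sets)
  have "?V \<subseteq> (\<Union>t\<le>n. first_exit S t \<inter> ?V) \<union> (cylinder (\<lambda>_. S) n \<inter> ?V)"
    using UN_first_exit[of S n] by (auto simp: cylinder_def)
  then have "hit_prob T y a
      \<le> measure (Px y) (\<Union>t\<le>n. first_exit S t \<inter> ?V) + measure (Px y) (cylinder (\<lambda>_. S) n \<inter> ?V)"
    unfolding hit_prob_def using first_exit_sets stay_sets
    by (intro order_trans[OF P.finite_measure_mono measure_Un_le]) auto
  also have "measure (Px y) (\<Union>t\<le>n. first_exit S t \<inter> ?V) \<le> (\<Sum>t\<le>n. measure (Px y) (first_exit S t \<inter> ?V))"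
    using first_exit_sets by (intro measure_UNION_le) auto
  \<comment> \<open>A path leaving \<open>S\<close> first at \<open>t \<le> n\<close> sits outside \<open>S\<close> with \<open>a - t \<ge> a - n\<close> steps to go.\<close>
  also have "\<dots> \<le> (\<Sum>t\<le>n. c1 * measure (Px y) (first_exit S t))"
  proof (rule sum_mono)
    fix t assume "t \<in> {..n}"
    then have "t \<le> a" "a - n \<le> a - t"
      using \<open>n \<le> a\<close> by auto
    then have "hit_prob T z (a - t) \<le> c1" if "z \<notin> S" for z
      using hit_prob_antimono[of T "a - n" "a - t" z] outside[OF that] by simp
    then show "measure (Px y) (first_exit S t \<inter> ?V) \<le> c1 * measure (Px y) (first_exit S t)"
      using markov_hit_le[of "\<lambda>j. if j < t then S else - S" T t "a - t" c1 y] \<open>t \<le> a\<close>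
      by (simp add: first_exit_def)
  qed
  also have "measure (Px y) (cylinder (\<lambda>_. S) n \<inter> ?V) \<le> c2 * measure (Px y) (cylinder (\<lambda>_. S) n)"
    using markov_hit_le[of "\<lambda>_. S" T n "a - n" c2 y] inside \<open>n \<le> a\<close> by simp
  finally show ?thesis
    using assms by (simp add: exit_prob_eq_sum_first_exit stay_prob_eq_cylinder sum_distrib_left)
qed

lemma hit_prob_le_of_stay_prob:
  assumes "T \<in> sets borel" and stay: "\<And>n. 1 - \<epsilon> \<le> stay_prob (Px z) n (- T)"
  shows "hit_prob T z a \<le> \<epsilon>"
proof (rule LIMSEQ_le_const2)
  show "(\<lambda>b. measure (Px z) (visits T a b)) \<longlonglongrightarrow> hit_prob T z a"
    using tendsto_prob_visits[of UNIV z T a] assms by (simp add: hit_prob_def)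
  interpret P: prob_space "Px z" by simp
  have "measure (Px z) (visits T a b) \<le> \<epsilon>" for b
  proof -
    have "visits T a b \<subseteq> visits T 0 b"
      by (auto simp: visits_def)
    then have "measure (Px z) (visits T a b) \<le> measure (Px z) (visits T 0 b)"
      using assms by (intro P.finite_measure_mono) auto
    also have "\<dots> = 1 - stay_prob (Px z) b (- T)"
      using assms by (simp add: prob_visits stay_prob_eq_cylinder)
    finally show ?thesis
      using stay[of b] by simp
  qed
  then show "\<exists>N. \<forall>b\<ge>N. measure (Px z) (visits T a b) \<le> \<epsilon>"
    by blast
qed

lemma hit_prob_le_of_exit_prob:
  assumes "S \<in> sets borel" "T \<in> sets borel" "0 \<le> c" "0 \<le> p"
    and outside: "\<And>z b. z \<notin> S \<Longrightarrow> m \<le> b \<Longrightarrow> hit_prob T z b \<le> c"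
    and exit: "\<And>z. z \<in> S - R \<Longrightarrow> 1 - p \<le> exit_prob (Px z) n S"
    and "z \<notin> R" "m + n \<le> a"
  shows "hit_prob T z a \<le> c + p"
proof (cases "z \<in> S")
  case True
  have "hit_prob T z a \<le> c * exit_prob (Px z) n S + 1 * stay_prob (Px z) n S"
    using assms by (intro hit_prob_first_exit_le) (auto intro: hit_prob_le_1)
  also have "\<dots> = c * exit_prob (Px z) n S + (1 - exit_prob (Px z) n S)"
    using assms by (simp add: exit_prob_eq_1_minus_stay_prob)
  also have "\<dots> \<le> c + p"
    using exit[of z] True \<open>z \<notin> R\<close> mult_left_le[OF exit_prob_le_1[of z n S] \<open>0 \<le> c\<close>] by simp
  finally show ?thesis .
next
  case False
  then have "hit_prob T z a \<le> c"
    using outside[of z a] \<open>m + n \<le> a\<close> by simp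
  then show ?thesis
    using \<open>0 \<le> p\<close> by simp
qed

lemma hit_prob_le_of_repeated_exit:
  assumes [measurable]: "S \<in> sets borel" "T \<in> sets borel" "0 \<le> c"
    and outside: "\<And>z b. z \<notin> S \<Longrightarrow> m \<le> b \<Longrightarrow> hit_prob T z b \<le> c"
    and exit: "\<And>z. z \<in> S \<Longrightarrow> \<beta> \<le> exit_prob (Px z) n S"
  shows "z \<in> S \<Longrightarrow> k * n + m \<le> a \<Longrightarrow> hit_prob T z a \<le> (1 - \<beta>) ^ k + c"
proof (induction k arbitrary: z a)
  case 0
  then show ?case
    using hit_prob_le_1[of T z a] assms by simp
next
  case (Suc k)
  have "\<beta> \<le> 1"
    using exit[OF Suc.prems(1)] exit_prob_le_1 by (rule order_trans)
  then have "0 \<le> (1 - \<beta>) ^ k"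
    by simp
  have "hit_prob T z a \<le> c * exit_prob (Px z) n S + ((1 - \<beta>) ^ k + c) * stay_prob (Px z) n S"
    using Suc.prems(2) by (intro hit_prob_first_exit_le outside Suc.IH) auto
  also have "\<dots> = c + (1 - \<beta>) ^ k * (1 - exit_prob (Px z) n S)"
    by (simp add: exit_prob_eq_1_minus_stay_prob algebra_simps)
  also have "\<dots> \<le> c + (1 - \<beta>) ^ k * (1 - \<beta>)"
    using exit[OF Suc.prems(1)] \<open>0 \<le> (1 - \<beta>) ^ k\<close> by (intro add_left_mono mult_left_mono) auto
  finally show ?case
    by (simp add: algebra_simps)
qed

end

theorem proposition4p3:
  fixes K :: "'a::topological_space \<Rightarrow> 'a measure"
    and Px :: "'a \<Rightarrow> (nat \<Rightarrow> 'a) measure"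
    and S0 S1 S2 :: "'a set"
    and r b0 :: real and n0 n1 n2 q :: nat
  assumes compact_space: "compact (UNIV :: 'a set)"
    and kernel: "stochastic_kernel K"
    and laws: "\<And>x. markov_chain_law K x (Px x)"
    and S0: "S0 \<in> sets borel" and S1: "S1 \<in> sets borel" and S2: "S2 \<in> sets borel"
    and S01: "S0 \<subseteq> S1" and S12: "S1 \<subseteq> S2"
    and r_pos: "r > 0"
    and b0_pos: "b0 > 0"
    and A1: "\<And>x. x \<in> S0 \<Longrightarrow> exit_prob (Px x) n0 S0 \<ge> b0"
    and A2: "\<And>x. x \<in> S1 - S0 \<Longrightarrow> exit_prob (Px x) n1 S1 \<ge> 1 - r / 4"
    and A3: "\<And>x. x \<in> S2 - S1 \<Longrightarrow> exit_prob (Px x) n2 S2 \<ge> 1 - r / 4"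
    and A4: "\<And>x n. x \<in> - S2 \<Longrightarrow> stay_prob (Px x) n (- S1) \<ge> 1 - r / 4"
    and q: "(1 - b0) ^ q < r / 4"
  shows "\<forall>x. measure (Px x) {\<omega> \<in> space (Px x). \<exists>j \<ge> q * n0 + n1 + n2. \<omega> j \<in> S1} < r"
proof -
  interpret markov_chain_laws K Px
    using kernel laws by unfold_locales
  have outside_S2: "hit_prob S1 z a \<le> r / 4" if "z \<notin> S2" for z a
    using A4 that S1 by (intro hit_prob_le_of_stay_prob) auto
  have outside_S1: "hit_prob S1 z a \<le> r / 4 + r / 4" if "z \<notin> S1" "n2 \<le> a" for z a
    by (rule hit_prob_le_of_exit_prob[where S=S2 and m=0]) (use S1 S2 r_pos outside_S2 A3 that in auto)
  have outside_S0: "hit_prob S1 z a \<le> r / 4 + r / 4 + r / 4" if "z \<notin> S0" "n2 + n1 \<le> a" for z a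
    by (rule hit_prob_le_of_exit_prob[where S=S1 and m=n2]) (use S1 r_pos outside_S1 A2 that in auto)
  have inside_S0: "hit_prob S1 z a \<le> (1 - b0) ^ q + (r / 4 + r / 4 + r / 4)"
    if "z \<in> S0" "q * n0 + (n2 + n1) \<le> a" for z a
    by (rule hit_prob_le_of_repeated_exit[where S=S0]) (use S0 S1 r_pos outside_S0 A1 that in auto)
  show ?thesis
  proof
    fix x
    have "measure (Px x) {\<omega> \<in> space (Px x). \<exists>j \<ge> q * n0 + n1 + n2. \<omega> j \<in> S1}
        = hit_prob S1 x (q * n0 + n1 + n2)"
      by (simp add: hit_prob_def visits_after_def)
    also have "\<dots> < r"
      using inside_S0[of x "q * n0 + n1 + n2"] outside_S0[of x "q * n0 + n1 + n2"] q r_pos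
      by (cases "x \<in> S0") auto
    finally show "measure (Px x) {\<omega> \<in> space (Px x). \<exists>j \<ge> q * n0 + n1 + n2. \<omega> j \<in> S1} < r" .
  qed
qed

end
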